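(* Let $d\ge2$ and suppose that $t\in\left(\frac1{e\,\mu_{d-1}},\frac1{\mu_d}\right)$. Define $\xi_t=|\log(\mu_{d-1}t)|$ (with $\mu_1=1$). For $N\ge1$ let $G_N(a,t)=\sum_{n=0}^N A_n^+(a)t^n$, regarded as a polynomial of degree $N$ in $a$, and for $\rho\in(0,1)$ let $\nu_N(\rho)$ be the number of its $a$-plane zeros (Yang-Lee zeros, with multiplicity) in the annulus $1-\rho\le|a|\le\frac1{1-\rho}$. If $\xi_t<\rho<1$, then \[ 0<1-\frac1\rho\xi_t\le\liminf_{N\to\infty}\frac1N\nu_N(\rho)\le\limsup_{N\to\infty}\frac1N\nu_N(\rho)\le1, \] and a positive fraction of Yang-Lee zeros of $G_N(a,t)$ are in the annulus $1-\rho<|a|<\frac1{1-\rho}$ in the complex $a$-plane.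
   Context: Let $\mathbb{L}^d_+$ be the half-lattice of the $d$-dimensional hypercubic lattice (vertices with last coordinate $\ge0$). A positive walk is a self-avoiding walk in $\mathbb{L}^d_+$ starting at the origin; its visits are its vertices other than the origin with last coordinate $0$. $c_n^+(v)$ is the number of positive walks of length $n$ with $v$ visits and $A_n^+(a)=\sum_{v=0}^n c_n^+(v)a^v$. $\mu_d$ and $\mu_{d-1}$ are the growth constants of self-avoiding walks in $d$ and $d-1$ dimensions, with the convention $\mu_1=1$. *)

theory Defs
  imports Complex_Main "HOL-Computational_Algebra.Polynomial" "HOL-Library.Extended_Real"
    "HOL-Library.Liminf_Limsup"
begin

text \<open>Vertices of the hypercubic lattice Z^d are integer lists of length d.
  The last coordinate is the entry with index d - 1.\<close>

definition origin :: "nat \<Rightarrow> int list" where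
  "origin d = replicate d 0"

definition lattice_adj :: "nat \<Rightarrow> int list \<Rightarrow> int list \<Rightarrow> bool" where
  "lattice_adj d x y \<longleftrightarrow> length x = d \<and> length y = d \<and>
     (\<Sum>i<d. \<bar>x ! i - y ! i\<bar>) = 1"

definition saw :: "nat \<Rightarrow> nat \<Rightarrow> int list list set" where
  "saw d n = {w. length w = Suc n \<and> w ! 0 = origin d \<and> distinct w \<and>
                 (\<forall>i<n. lattice_adj d (w ! i) (w ! Suc i))}"

definition mu :: "nat \<Rightarrow> real" where
  "mu d = (if d = 1 then 1 else lim (\<lambda>n. root n (real (card (saw d n)))))"

definition pos_walk :: "nat \<Rightarrow> nat \<Rightarrow> int list list set" where
  "pos_walk d n = {w \<in> saw d n. \<forall>i\<le>n. (w ! i) ! (d - 1) \<ge> 0}"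

definition visits :: "nat \<Rightarrow> int list list \<Rightarrow> nat" where
  "visits d w = card {i. i < length w \<and> w ! i \<noteq> origin d \<and> (w ! i) ! (d - 1) = 0}"

definition cplus :: "nat \<Rightarrow> nat \<Rightarrow> nat \<Rightarrow> nat" where
  "cplus d n v = card {w \<in> pos_walk d n. visits d w = v}"

definition A_poly :: "nat \<Rightarrow> nat \<Rightarrow> complex poly" where
  "A_poly d n = (\<Sum>v\<le>n. monom (of_nat (cplus d n v)) v)"

definition G_poly :: "nat \<Rightarrow> real \<Rightarrow> nat \<Rightarrow> complex poly" where
  "G_poly d t N = (\<Sum>n\<le>N. smult (complex_of_real (t ^ n)) (A_poly d n))"

definition nu :: "nat \<Rightarrow> real \<Rightarrow> nat \<Rightarrow> real \<Rightarrow> nat" where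
  "nu d t N \<rho> = (\<Sum>z\<in>{z. poly (G_poly d t N) z = 0 \<and>
       1 - \<rho> \<le> cmod z \<and> cmod z \<le> 1 / (1 - \<rho>)}. order z (G_poly d t N))"

definition nu_open :: "nat \<Rightarrow> real \<Rightarrow> nat \<Rightarrow> real \<Rightarrow> nat" where
  "nu_open d t N \<rho> = (\<Sum>z\<in>{z. poly (G_poly d t N) z = 0 \<and>
       1 - \<rho> < cmod z \<and> cmod z < 1 / (1 - \<rho>)}. order z (G_poly d t N))"

end

theory Submission
  imports Defs "HOL-Computational_Algebra.Fundamental_Theorem_Algebra"
begin

text \<open>Write \<open>p = G_N(\<cdot>, t)\<close>, a polynomial of degree \<open>N\<close> with nonnegative coefficients.
  Landau's inequality bounds its Mahler measure \<open>|lead p| \<cdot> \<Prod> max 1 |z|\<close> by the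
  coefficient sum, which is at most \<open>S = \<Sum>\<^sub>n c\<^sub>n t\<^sup>n < \<infinity>\<close> since \<open>t < 1/\<mu>\<^sub>d\<close>.
  As \<open>|p(0)| = |lead p| \<cdot> \<Prod> |z| \<ge> 1\<close> (the empty walk), every zero in \<open>|z| \<le> 1 - \<rho>\<close>
  costs a factor \<open>e\<^sup>-\<^sup>\<rho>\<close>, so there are at most \<open>ln S / \<rho>\<close> of them. Walks of the
  boundary hyperplane are positive walks visiting it at every step, so
  \<open>|lead p| \<ge> (\<mu>\<^sub>d\<^sub>-\<^sub>1 t)\<^sup>N\<close>, and every zero in \<open>|z| \<ge> 1/(1 - \<rho>)\<close> contributes a factor
  \<open>e\<^sup>\<rho>\<close> to the Mahler measure: there are at most \<open>(ln S + N \<xi>\<^sub>t)/\<rho>\<close> of them.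
  The remaining \<open>N(1 - \<xi>\<^sub>t/\<rho>) - 2 ln S/\<rho>\<close> zeros lie in the open annulus.\<close>

section \<open>Fekete's lemma\<close>

lemma subadditive_mult_add:
  fixes a :: "nat \<Rightarrow> real"
  assumes sub: "\<And>m n. a (m + n) \<le> a m + a n"
  shows "a (q * m + r) \<le> real q * a m + a r"
proof (induction q)
  case 0
  then show ?case by simp
next
  case (Suc q)
  have "a (Suc q * m + r) = a (m + (q * m + r))" by (simp add: algebra_simps)
  also have "\<dots> \<le> a m + a (q * m + r)" by (rule sub)
  also have "\<dots> \<le> a m + (real q * a m + a r)" using Suc by simp
  finally show ?case by (simp add: algebra_simps)
qed

lemma subadditive_ratio_le:
  fixes a :: "nat \<Rightarrow> real"
  assumes sub: "\<And>m n. a (m + n) \<le> a m + a n" and nonneg: "\<And>n. 0 \<le> a n"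
    and m: "0 < m" and n: "0 < n"
  shows "a n / n \<le> a m / m + Max (a ` {..<m}) / n"
proof -
  define q r where "q = n div m" and "r = n mod m"
  have "real q * real m \<le> real n"
    unfolding q_def by (metis div_times_less_eq_dividend of_nat_le_iff of_nat_mult)
  then have "real q * a m \<le> real n / real m * a m"
    using m nonneg[of m] by (intro mult_right_mono) (simp_all add: field_simps)
  moreover have "a r \<le> Max (a ` {..<m})"
    using m by (intro Max_ge) (simp_all add: r_def)
  moreover have "a n \<le> real q * a m + a r"
    using subadditive_mult_add[OF sub, of q m r] by (simp add: q_def r_def)
  ultimately have "a n \<le> real n / real m * a m + Max (a ` {..<m})" by linarith
  then show ?thesis using m n by (simp add: field_simps)
qed

theorem fekete_subadditive:
  fixes a :: "nat \<Rightarrow> real"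
  assumes sub: "\<And>m n. a (m + n) \<le> a m + a n" and nonneg: "\<And>n. 0 \<le> a n"
  shows "(\<lambda>n. a n / n) \<longlonglongrightarrow> (INF n\<in>{1..}. a n / n)"
proof (rule LIMSEQ_I)
  define L where "L = (INF n\<in>{1..}. a n / n)"
  have bdd: "bdd_below ((\<lambda>n. a n / n) ` {1..})"
    by (rule bdd_belowI[of _ 0]) (auto intro: divide_nonneg_nonneg nonneg)
  fix e :: real
  assume e: "0 < e"
  have "L < L + e / 2" using e by simp
  then obtain m where m: "1 \<le> m" "a m / m < L + e / 2"
    unfolding L_def using bdd by (subst (asm) cINF_less_iff) auto
  define A where "A = Max (a ` {..<m})"
  obtain N :: nat where N: "2 * A / e < N"
    using reals_Archimedean2 by blast
  have "norm (a n / n - L) < e" if n: "Suc N \<le> n" for n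
  proof -
    have "2 * A < e * N" using N e by (simp add: field_simps)
    also have "\<dots> < e * n" using n e by (intro mult_strict_left_mono) auto
    finally have "A / n < e / 2" using n by (simp add: field_simps)
    moreover have "a n / n \<le> a m / m + A / n"
      unfolding A_def using m n by (intro subadditive_ratio_le sub nonneg) simp_all
    moreover have "L \<le> a n / n"
      unfolding L_def using n bdd by (intro cINF_lower) simp_all
    ultimately show ?thesis using m(2) unfolding real_norm_def by linarith
  qed
  then show "\<exists>N. \<forall>n\<ge>N. norm (a n / n - (INF n\<in>{1..}. a n / n)) < e"
    unfolding L_def by blast
qed

section \<open>Landau's inequality\<close>

definition coeff_sqnorm :: "nat \<Rightarrow> complex poly \<Rightarrow> real" where
  "coeff_sqnorm M p = (\<Sum>k\<le>M. (cmod (coeff p k))\<^sup>2)"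

definition mahler_measure :: "complex poly \<Rightarrow> real" where
  "mahler_measure p = cmod (lead_coeff p) * (\<Prod>z\<in>#proots p. max 1 (cmod z))"

lemma coeff_sqnorm_pCons_0:
  assumes "degree f < M"
  shows "coeff_sqnorm M (pCons 0 f) = coeff_sqnorm M f"
proof -
  obtain M' where M': "M = Suc M'" using assms by (cases M) auto
  have "coeff_sqnorm M (pCons 0 f) = (\<Sum>k\<le>M'. (cmod (coeff f k))\<^sup>2)"
    unfolding coeff_sqnorm_def M' by (subst sum.atMost_Suc_shift) simp
  also have "\<dots> = coeff_sqnorm M f"
    unfolding coeff_sqnorm_def M' using assms M' by (simp add: coeff_eq_0)
  finally show ?thesis .
qed

lemma cmod_sq_reflect_diff:
  fixes a x y :: complex
  shows "(cmod (- a * x + y))\<^sup>2 - (cmod (- x + cnj a * y))\<^sup>2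
         = ((cmod a)\<^sup>2 - 1) * ((cmod x)\<^sup>2 - (cmod y)\<^sup>2)"
proof -
  have "complex_of_real ((cmod (- a * x + y))\<^sup>2 - (cmod (- x + cnj a * y))\<^sup>2)
      = complex_of_real (((cmod a)\<^sup>2 - 1) * ((cmod x)\<^sup>2 - (cmod y)\<^sup>2))"
    by (simp only: of_real_diff of_real_mult of_real_1 complex_norm_square complex_cnj_add
        complex_cnj_mult complex_cnj_minus complex_cnj_cnj) (simp add: algebra_simps)
  then show ?thesis by (simp only: of_real_eq_iff)
qed

text \<open>Replacing the root \<open>a\<close> of \<open>f\<close> by its reflection \<open>1 / cnj a\<close> in the
  unit circle preserves the \<open>\<ell>\<^sup>2\<close>-norm of the coefficients.\<close>

lemma coeff_sqnorm_reflect_root: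
  assumes "degree f < M"
  shows "coeff_sqnorm M ([:-a, 1:] * f) = coeff_sqnorm M ([:-1, cnj a:] * f)"
proof -
  have c1: "coeff ([:-a, 1:] * f) k = - a * coeff f k + coeff (pCons 0 f) k" for k
    by (simp add: mult_pCons_left)
  have c2: "coeff ([:-1, cnj a:] * f) k = - coeff f k + cnj a * coeff (pCons 0 f) k" for k
    by (cases k) (simp_all add: mult_pCons_left)
  have "coeff_sqnorm M ([:-a, 1:] * f) - coeff_sqnorm M ([:-1, cnj a:] * f)
     = (\<Sum>k\<le>M. ((cmod a)\<^sup>2 - 1) * ((cmod (coeff f k))\<^sup>2 - (cmod (coeff (pCons 0 f) k))\<^sup>2))"
    unfolding coeff_sqnorm_def c1 c2 sum_subtractf[symmetric]
    by (rule sum.cong[OF refl], rule cmod_sq_reflect_diff)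
  also have "\<dots> = ((cmod a)\<^sup>2 - 1) * (coeff_sqnorm M f - coeff_sqnorm M (pCons 0 f))"
    unfolding coeff_sqnorm_def by (simp only: sum_distrib_left sum_subtractf right_diff_distrib)
  also have "\<dots> = 0" using coeff_sqnorm_pCons_0[OF assms] by simp
  finally show ?thesis by simp
qed

definition unit_disc_factor :: "complex \<Rightarrow> complex poly" where
  "unit_disc_factor z = (if 1 < cmod z then [:-1, cnj z:] else [:-z, 1:])"

lemma degree_prod_unit_disc_factor: "degree (\<Prod>z\<in>#zs. unit_disc_factor z) \<le> size zs"
proof (induction zs)
  case empty
  then show ?case by simp
next
  case (add x zs)
  have "degree (unit_disc_factor x) \<le> 1" by (simp add: unit_disc_factor_def)
  then show ?case
    using add degree_mult_le[of "unit_disc_factor x" "\<Prod>z\<in>#zs. unit_disc_factor z"] by simp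
qed

lemma norm_lead_coeff_prod_unit_disc_factor:
  "cmod (lead_coeff (\<Prod>z\<in>#zs. unit_disc_factor z)) = (\<Prod>z\<in>#zs. max 1 (cmod z))"
  by (induction zs) (auto simp: lead_coeff_mult norm_mult unit_disc_factor_def)

lemma coeff_sqnorm_prod_unit_disc_factor:
  assumes "degree f + size zs \<le> M"
  shows "coeff_sqnorm M (f * (\<Prod>z\<in>#zs. [:-z, 1:])) = coeff_sqnorm M (f * (\<Prod>z\<in>#zs. unit_disc_factor z))"
  using assms
proof (induction zs arbitrary: f)
  case empty
  then show ?case by simp
next
  case (add a zs)
  let ?P = "\<Prod>z\<in>#zs. [:-z, 1:]" and ?Q = "\<Prod>z\<in>#zs. unit_disc_factor z"
  have deg: "degree (f * [:-a, 1:]) + size zs \<le> M"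
    using add.prems degree_mult_le[of f "[:-a,1:]"] by simp
  have deg_Q: "degree (f * ?Q) < M"
    using add.prems degree_mult_le[of f ?Q] degree_prod_unit_disc_factor[of zs] by simp
  have "coeff_sqnorm M (f * (\<Prod>z\<in>#add_mset a zs. [:-z, 1:])) = coeff_sqnorm M ((f * [:-a, 1:]) * ?P)"
    by (simp only: prod_mset.add_mset image_mset_add_mset mult.assoc)
  also have "\<dots> = coeff_sqnorm M ((f * [:-a, 1:]) * ?Q)" by (rule add.IH[OF deg])
  also have "\<dots> = coeff_sqnorm M ([:-a, 1:] * (f * ?Q))" by (simp only: ac_simps)
  also have "\<dots> = coeff_sqnorm M (unit_disc_factor a * (f * ?Q))"
    using coeff_sqnorm_reflect_root[OF deg_Q] by (simp add: unit_disc_factor_def)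
  finally show ?case by (simp only: prod_mset.add_mset image_mset_add_mset ac_simps)
qed

theorem landau_inequality:
  fixes p :: "complex poly"
  shows "mahler_measure p \<le> (\<Sum>k\<le>degree p. cmod (coeff p k))"
proof -
  let ?c = "lead_coeff p" and ?R = "proots p" and ?M = "degree p"
  let ?q = "[:?c:] * (\<Prod>z\<in>#?R. unit_disc_factor z)"
  have p: "p = [:?c:] * (\<Prod>z\<in>#?R. [:-z, 1:])"
    using complex_poly_decompose_multiset[of p] by simp
  have deg_q: "degree ?q \<le> ?M"
    using degree_prod_unit_disc_factor[of ?R] by (simp add: size_proots_complex)
  have "(mahler_measure p)\<^sup>2 = (cmod (lead_coeff ?q))\<^sup>2"
    by (simp add: mahler_measure_def lead_coeff_mult norm_mult norm_lead_coeff_prod_unit_disc_factor)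
  also have "\<dots> \<le> coeff_sqnorm ?M ?q"
    unfolding coeff_sqnorm_def using deg_q by (intro member_le_sum) auto
  also have "\<dots> = coeff_sqnorm ?M p"
    by (subst p, rule coeff_sqnorm_prod_unit_disc_factor[symmetric]) (simp add: size_proots_complex)
  also have "\<dots> \<le> (\<Sum>k\<le>?M. cmod (coeff p k))\<^sup>2"
    unfolding coeff_sqnorm_def power2_eq_square sum_distrib_right
    by (intro sum_mono mult_left_mono member_le_sum) auto
  finally show ?thesis by (rule power2_le_imp_le) (simp add: sum_nonneg)
qed

section \<open>Zeros of a polynomial in an annulus\<close>

lemma sum_order_eq_size_filter_proots:
  fixes p :: "complex poly"
  assumes "p \<noteq> 0"
  shows "(\<Sum>z\<in>{z. poly p z = 0 \<and> P z}. order z p) = size (filter_mset P (proots p))"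
proof -
  have "set_mset (filter_mset P (proots p)) = {z. poly p z = 0 \<and> P z}" using assms by auto
  then show ?thesis
    using assms by (simp add: size_multiset_overloaded_eq)
qed

lemma size_filter_mset_norm_split:
  fixes r R :: real
  assumes "r < R"
  shows "size M = size (filter_mset (\<lambda>z. cmod z \<le> r) M)
      + size (filter_mset (\<lambda>z. r < cmod z \<and> cmod z < R) M) + size (filter_mset (\<lambda>z. R \<le> cmod z) M)"
  using assms by (induction M) auto

lemma prod_mset_min_one_le_power:
  fixes r :: real
  assumes "0 \<le> r" "r \<le> 1"
  shows "(\<Prod>z\<in>#M. min 1 (cmod z)) \<le> r ^ size (filter_mset (\<lambda>z. cmod z \<le> r) M)"
proof (induction M)
  case empty
  then show ?case by simp
next
  case (add a M)
  have "0 \<le> (\<Prod>z\<in>#M. min 1 (cmod z))" by (induction M) auto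
  then have "min 1 (cmod a) * (\<Prod>z\<in>#M. min 1 (cmod z))
      \<le> (if cmod a \<le> r then r else 1) * r ^ size (filter_mset (\<lambda>z. cmod z \<le> r) M)"
    using add assms by (intro mult_mono) auto
  then show ?case by (cases "cmod a \<le> r") simp_all
qed

lemma power_le_prod_mset_max_one:
  fixes R :: real
  assumes "1 \<le> R"
  shows "R ^ size (filter_mset (\<lambda>z. R \<le> cmod z) M) \<le> (\<Prod>z\<in>#M. max 1 (cmod z))"
proof (induction M)
  case empty
  then show ?case by simp
next
  case (add a M)
  have "(if R \<le> cmod a then R else 1) * R ^ size (filter_mset (\<lambda>z. R \<le> cmod z) M)
      \<le> max 1 (cmod a) * (\<Prod>z\<in>#M. max 1 (cmod z))"
    using add assms by (intro mult_mono) auto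
  then show ?case by (cases "R \<le> cmod a") simp_all
qed

lemma norm_prod_mset_complex: "cmod (\<Prod>z\<in>#M. f z) = (\<Prod>z\<in>#M. cmod (f z))"
  by (induction M) (simp_all add: norm_mult)

lemma mahler_measure_nonneg: "0 \<le> mahler_measure p"
  using power_le_prod_mset_max_one[of 1 "proots p"] by (simp add: mahler_measure_def)

lemma norm_coeff_0_eq_mahler_measure:
  fixes p :: "complex poly"
  shows "cmod (coeff p 0) = mahler_measure p * (\<Prod>z\<in>#proots p. min 1 (cmod z))"
proof -
  have "coeff p 0 = poly (smult (lead_coeff p) (\<Prod>x\<in>#proots p. [:-x, 1:])) 0"
    by (simp only: complex_poly_decompose_multiset poly_0_coeff_0)
  also have "\<dots> = lead_coeff p * (\<Prod>x\<in>#proots p. - x)"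
    by (simp add: poly_prod_mset multiset.map_comp o_def)
  finally have "cmod (coeff p 0) = cmod (lead_coeff p) * (\<Prod>z\<in>#proots p. cmod z)"
    by (simp add: norm_mult norm_prod_mset_complex)
  also have "(\<Prod>z\<in>#proots p. cmod z) = (\<Prod>z\<in>#proots p. max 1 (cmod z) * min 1 (cmod z))"
    by (intro arg_cong[where f = prod_mset] image_mset_cong) (simp add: max_def min_def)
  finally show ?thesis by (simp add: mahler_measure_def prod_mset.distrib mult.assoc)
qed

lemma prod_mset_min_one_nonneg: "0 \<le> (\<Prod>z\<in>#M. min 1 (cmod z))"
  by (induction M) auto

lemma one_minus_le_exp_neg: "1 - (x::real) \<le> exp (- x)"
  using exp_ge_add_one_self[of "- x"] by simp

lemma small_roots_bound:
  fixes p :: "complex poly" and \<rho> S :: real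
  assumes p0: "1 \<le> cmod (coeff p 0)" and S: "(\<Sum>k\<le>degree p. cmod (coeff p k)) \<le> S"
    and \<rho>: "0 < \<rho>" "\<rho> < 1"
  shows "size (filter_mset (\<lambda>z. cmod z \<le> 1 - \<rho>) (proots p)) * \<rho> \<le> ln S"
proof -
  define k where "k = size (filter_mset (\<lambda>z. cmod z \<le> 1 - \<rho>) (proots p))"
  have mahler: "0 \<le> mahler_measure p" "mahler_measure p \<le> S"
    using landau_inequality[of p] S mahler_measure_nonneg[of p] by simp_all
  have "1 \<le> mahler_measure p * (\<Prod>z\<in>#proots p. min 1 (cmod z))"
    using p0 norm_coeff_0_eq_mahler_measure[of p] by simp
  also have "\<dots> \<le> S * (1 - \<rho>) ^ k"
    unfolding k_def using mahler \<rho>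
    by (intro mult_mono prod_mset_min_one_le_power prod_mset_min_one_nonneg) auto
  also have "\<dots> \<le> S * exp (- \<rho>) ^ k"
    using mahler \<rho> by (intro mult_left_mono power_mono one_minus_le_exp_neg) auto
  finally have "exp \<rho> ^ k \<le> S"
    by (simp add: exp_minus field_simps power_divide)
  then have "exp (k * \<rho>) \<le> S" by (simp add: exp_of_nat_mult)
  then show ?thesis unfolding k_def by (subst ln_ge_iff) (auto intro: less_le_trans[OF exp_gt_zero])
qed

lemma large_roots_bound:
  fixes p :: "complex poly" and q \<rho> S :: real
  assumes q: "0 < q" "q ^ degree p \<le> cmod (lead_coeff p)"
    and S: "(\<Sum>k\<le>degree p. cmod (coeff p k)) \<le> S" and \<rho>: "0 < \<rho>" "\<rho> < 1"
  shows "size (filter_mset (\<lambda>z. 1 / (1 - \<rho>) \<le> cmod z) (proots p)) * \<rho> \<le> ln S - degree p * ln q"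
proof -
  define k where "k = size (filter_mset (\<lambda>z. 1 / (1 - \<rho>) \<le> cmod z) (proots p))"
  have R: "exp \<rho> \<le> 1 / (1 - \<rho>)"
    using one_minus_le_exp_neg[of \<rho>] \<rho> by (simp add: exp_minus field_simps)
  have "exp (degree p * ln q + k * \<rho>) = q ^ degree p * exp \<rho> ^ k"
    using q by (simp add: exp_add exp_of_nat_mult)
  also have "\<dots> \<le> cmod (lead_coeff p) * (\<Prod>z\<in>#proots p. max 1 (cmod z))"
    unfolding k_def using q R \<rho>
    by (intro mult_mono power_le_prod_mset_max_one order_trans[OF power_mono[OF R]]) auto
  also have "\<dots> \<le> S"
    using landau_inequality[of p] S by (simp add: mahler_measure_def)
  finally have "degree p * ln q + k * \<rho> \<le> ln S"
    by (subst ln_ge_iff) (auto intro: less_le_trans[OF exp_gt_zero])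
  then show ?thesis unfolding k_def by simp
qed

theorem annulus_roots_lower_bound:
  fixes p :: "complex poly" and q \<rho> S :: real
  assumes p0: "1 \<le> cmod (coeff p 0)" and q: "0 < q" "q ^ degree p \<le> cmod (lead_coeff p)"
    and S: "(\<Sum>k\<le>degree p. cmod (coeff p k)) \<le> S" and \<rho>: "0 < \<rho>" "\<rho> < 1"
  shows "degree p * (1 - \<bar>ln q\<bar> / \<rho>) - 2 * ln S / \<rho>
    \<le> size (filter_mset (\<lambda>z. 1 - \<rho> < cmod z \<and> cmod z < 1 / (1 - \<rho>)) (proots p))"
proof -
  define small where "small = size (filter_mset (\<lambda>z. cmod z \<le> 1 - \<rho>) (proots p))"
  define middle where
    "middle = size (filter_mset (\<lambda>z. 1 - \<rho> < cmod z \<and> cmod z < 1 / (1 - \<rho>)) (proots p))"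
  define large where "large = size (filter_mset (\<lambda>z. 1 / (1 - \<rho>) \<le> cmod z) (proots p))"
  have "1 - \<rho> < 1 / (1 - \<rho>)"
    using \<rho> by (simp add: field_simps)
  then have "degree p = small + middle + large"
    unfolding small_def middle_def large_def
    using size_filter_mset_norm_split size_proots_complex by metis
  then have "degree p * \<rho> = small * \<rho> + middle * \<rho> + large * \<rho>"
    by (simp add: distrib_right)
  moreover have "- (degree p * ln q) \<le> degree p * \<bar>ln q\<bar>"
    using mult_left_mono[of "- ln q" "\<bar>ln q\<bar>" "degree p"] by simp
  moreover note small_roots_bound[OF p0 S \<rho>] large_roots_bound[OF q S \<rho>]
  ultimately have "degree p * \<rho> - 2 * ln S - degree p * \<bar>ln q\<bar> \<le> middle * \<rho>"
    unfolding small_def large_def by linarith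
  then have "(degree p * \<rho> - 2 * ln S - degree p * \<bar>ln q\<bar>) / \<rho> \<le> middle"
    using \<rho> by (simp add: pos_divide_le_eq)
  moreover have "degree p * (1 - \<bar>ln q\<bar> / \<rho>) - 2 * ln S / \<rho>
      = (degree p * \<rho> - 2 * ln S - degree p * \<bar>ln q\<bar>) / \<rho>"
    using \<rho> by (simp add: field_simps)
  ultimately show ?thesis unfolding middle_def by linarith
qed

section \<open>Self-avoiding walks\<close>

lemma sawD:
  assumes "w \<in> saw d n"
  shows "length w = Suc n" "w ! 0 = origin d" "distinct w"
    "\<And>i. i < n \<Longrightarrow> lattice_adj d (w ! i) (w ! Suc i)"
  using assms unfolding saw_def by simp_all

lemma saw_nth_length:
  assumes "w \<in> saw d n" "i \<le> n"
  shows "length (w ! i) = d"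
proof (cases i)
  case 0
  then show ?thesis using assms by (simp add: saw_def origin_def)
next
  case (Suc j)
  then show ?thesis using sawD(4)[OF assms(1), of j] assms(2) by (simp add: lattice_adj_def)
qed

lemma saw_set_length:
  assumes "w \<in> saw d n" "v \<in> set w"
  shows "length v = d"
  using assms saw_nth_length[OF assms(1)] sawD(1)[OF assms(1)] by (auto simp: in_set_conv_nth)

lemma saw_nth_l1_norm_le:
  assumes "w \<in> saw d n" "i \<le> n"
  shows "(\<Sum>j<d. \<bar>w ! i ! j\<bar>) \<le> int i"
  using assms(2)
proof (induction i)
  case 0
  then show ?case using sawD(2)[OF assms(1)] by (simp add: origin_def)
next
  case (Suc i)
  have "(\<Sum>j<d. \<bar>w ! i ! j - w ! Suc i ! j\<bar>) = 1"
    using sawD(4)[OF assms(1), of i] Suc.prems by (simp add: lattice_adj_def)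
  moreover have "(\<Sum>j<d. \<bar>w ! Suc i ! j\<bar>) \<le> (\<Sum>j<d. \<bar>w ! i ! j\<bar> + \<bar>w ! i ! j - w ! Suc i ! j\<bar>)"
    by (intro sum_mono) linarith
  ultimately show ?case using Suc by (simp add: sum.distrib)
qed

lemma finite_saw: "finite (saw d n)"
proof -
  define B where "B = {x :: int list. set x \<subseteq> {- int n..int n} \<and> length x = d}"
  have "finite B" unfolding B_def by (intro finite_lists_length_eq) auto
  moreover have "set v \<subseteq> {- int n..int n}" if w: "w \<in> saw d n" and v: "v \<in> set w" for w v
  proof
    fix e assume "e \<in> set v"
    obtain i where i: "i \<le> n" "v = w ! i"
      using v sawD(1)[OF w] by (auto simp: in_set_conv_nth less_Suc_eq_le)
    then obtain j where j: "j < d" "e = w ! i ! j"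
      using \<open>e \<in> set v\<close> saw_nth_length[OF w] by (auto simp: in_set_conv_nth)
    have "\<bar>e\<bar> \<le> (\<Sum>j<d. \<bar>w ! i ! j\<bar>)" unfolding j(2) by (rule member_le_sum) (use j in auto)
    also have "\<dots> \<le> int i" using saw_nth_l1_norm_le[OF w i(1)] .
    finally show "e \<in> {- int n..int n}" using i by auto
  qed
  then have "saw d n \<subseteq> {w. set w \<subseteq> B \<and> length w = Suc n}"
    unfolding B_def using saw_set_length sawD(1) by blast
  ultimately show ?thesis by (blast intro: finite_subset finite_lists_length_eq)
qed

lemma straight_walk_in_saw:
  assumes "1 \<le> d"
  shows "map (\<lambda>i. int i # replicate (d - 1) 0) [0..<Suc n] \<in> saw d n"
proof -
  obtain k where d: "d = Suc k" using assms by (cases d) auto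
  have adj: "lattice_adj d (int i # replicate k 0) (int (Suc i) # replicate k 0)" for i
    unfolding lattice_adj_def d by (subst sum.lessThan_Suc_shift) simp
  have "inj (\<lambda>i. int i # replicate k (0::int))" by (rule injI) simp
  then show ?thesis
    using adj by (simp add: saw_def d origin_def distinct_map inj_on_def del: upt_Suc)
qed

lemma card_saw_pos: "1 \<le> d \<Longrightarrow> 0 < card (saw d n)"
  using straight_walk_in_saw[of d n] finite_saw[of d n] by (auto simp: card_gt_0_iff)

definition lattice_diff :: "int list \<Rightarrow> int list \<Rightarrow> int list" where
  "lattice_diff x c = map (\<lambda>i. x ! i - c ! i) [0..<length x]"

lemma inj_on_lattice_diff: "inj_on (\<lambda>v. lattice_diff v c) {v. length v = d}"
proof (rule inj_onI)
  fix v v' assume len: "v \<in> {v. length v = d}" "v' \<in> {v. length v = d}"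
    and eq: "lattice_diff v c = lattice_diff v' c"
  show "v = v'"
  proof (rule nth_equalityI)
    show "length v = length v'" using len by simp
    fix j assume j: "j < length v"
    have "lattice_diff v c ! j = lattice_diff v' c ! j" using eq by simp
    then show "v ! j = v' ! j" using j len by (simp add: lattice_diff_def)
  qed
qed

lemma lattice_adj_lattice_diff:
  assumes "lattice_adj d x y"
  shows "lattice_adj d (lattice_diff x c) (lattice_diff y c)"
proof -
  have "(\<Sum>j<d. \<bar>lattice_diff x c ! j - lattice_diff y c ! j\<bar>) = (\<Sum>j<d. \<bar>x ! j - y ! j\<bar>)"
    using assms by (intro sum.cong) (auto simp: lattice_adj_def lattice_diff_def)
  then show ?thesis using assms by (simp add: lattice_adj_def lattice_diff_def)
qed

lemma saw_take:
  assumes w: "w \<in> saw d (m + n)"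
  shows "take (Suc m) w \<in> saw d m"
proof -
  have "length (take (Suc m) w) = Suc m" "take (Suc m) w ! 0 = origin d"
    "distinct (take (Suc m) w)"
    using sawD(1-3)[OF w] by simp_all
  moreover have "\<forall>i<m. lattice_adj d (take (Suc m) w ! i) (take (Suc m) w ! Suc i)"
    using sawD(4)[OF w] by simp
  ultimately show ?thesis unfolding saw_def by blast
qed

lemma saw_drop_translate:
  assumes w: "w \<in> saw d (m + n)"
  shows "map (\<lambda>v. lattice_diff v (w ! m)) (drop m w) \<in> saw d n"
  unfolding saw_def
proof (intro CollectI conjI allI impI)
  let ?w = "map (\<lambda>v. lattice_diff v (w ! m)) (drop m w)"
  show "length ?w = Suc n" using sawD(1)[OF w] by simp
  have "lattice_diff (w ! m) (w ! m) = origin d"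
    using saw_nth_length[OF w, of m] by (simp add: lattice_diff_def origin_def map_replicate_const)
  then show "?w ! 0 = origin d" using sawD(1)[OF w] by simp
  have "inj_on (\<lambda>v. lattice_diff v (w ! m)) (set (drop m w))"
    using saw_set_length[OF w] by (blast intro: inj_on_subset[OF inj_on_lattice_diff] dest: in_set_dropD)
  then show "distinct ?w" using sawD(3)[OF w] by (simp add: distinct_map)
  fix i assume "i < n"
  then show "lattice_adj d (?w ! i) (?w ! Suc i)"
    using sawD(1)[OF w] sawD(4)[OF w, of "m + i"] by (simp add: lattice_adj_lattice_diff)
qed

text \<open>Splitting a walk at step \<open>m\<close> and translating the second half to the origin
  is injective, so the walk counts are submultiplicative.\<close>

lemma card_saw_add_le: "card (saw d (m + n)) \<le> card (saw d m) * card (saw d n)"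
proof -
  define F where "F w = (take (Suc m) w, map (\<lambda>v. lattice_diff v (w ! m)) (drop m w))" for w
  have "inj_on F (saw d (m + n))"
  proof (rule inj_onI)
    fix w w' assume w: "w \<in> saw d (m + n)" and w': "w' \<in> saw d (m + n)" and eq: "F w = F w'"
    have take: "take (Suc m) w = take (Suc m) w'" using eq by (simp add: F_def)
    then have "w ! m = w' ! m" by (metis lessI nth_take)
    moreover have "inj_on (\<lambda>v. lattice_diff v (w ! m)) (set (drop m w) \<union> set (drop m w'))"
      using saw_set_length[OF w] saw_set_length[OF w']
      by (blast intro: inj_on_subset[OF inj_on_lattice_diff] dest: in_set_dropD)
    ultimately have "drop m w = drop m w'"
      using eq by (simp add: F_def inj_on_map_eq_map)
    moreover have "take m w = take m w'" using arg_cong[OF take, of "take m"] by simp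
    ultimately show "w = w'" by (metis append_take_drop_id)
  qed
  moreover have "F ` saw d (m + n) \<subseteq> saw d m \<times> saw d n"
    using saw_take saw_drop_translate by (auto simp: F_def)
  ultimately have "card (saw d (m + n)) \<le> card (saw d m \<times> saw d n)"
    by (intro card_inj_on_le finite_cartesian_product finite_saw)
  then show ?thesis by (simp add: card_cartesian_product)
qed

lemma saw_growth_rate:
  assumes k: "1 \<le> k"
  obtains \<mu> :: real where "0 < \<mu>" "(\<lambda>n. root n (card (saw k n))) \<longlonglongrightarrow> \<mu>"
    "\<And>n. \<mu> ^ n \<le> card (saw k n)"
proof -
  define a where "a n = ln (card (saw k n))" for n
  have c1: "1 \<le> real (card (saw k n))" for n
    using card_saw_pos[OF k, of n] by linarith
  have sub: "a (m + n) \<le> a m + a n" for m n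
  proof -
    have "real (card (saw k (m + n))) \<le> real (card (saw k m)) * real (card (saw k n))"
      using card_saw_add_le[of k m n] by (metis of_nat_le_iff of_nat_mult)
    then have "a (m + n) \<le> ln (real (card (saw k m)) * real (card (saw k n)))"
      unfolding a_def using c1[of "m + n"] by simp
    then show ?thesis using c1[of m] c1[of n] by (simp add: a_def ln_mult)
  qed
  define L where "L = (INF n\<in>{1..}. a n / n)"
  have "(\<lambda>n. a n / n) \<longlonglongrightarrow> L"
    unfolding L_def by (rule fekete_subadditive[OF sub]) (use c1 in \<open>simp add: a_def\<close>)
  then have "(\<lambda>n. exp (a n / n)) \<longlonglongrightarrow> exp L" by (rule tendsto_exp)
  moreover have "\<forall>\<^sub>F n in sequentially. exp (a n / n) = root n (card (saw k n))"
    using card_saw_pos[OF k] by (intro eventually_sequentiallyI[of 1]) (simp add: a_def root_powr_inverse powr_def)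
  ultimately have "(\<lambda>n. root n (card (saw k n))) \<longlonglongrightarrow> exp L"
    by (rule Lim_transform_eventually)
  moreover have "exp L ^ n \<le> card (saw k n)" for n
  proof (cases "n = 0")
    case True
    then show ?thesis using c1[of 0] by simp
  next
    case False
    have "L \<le> a n / n"
      unfolding L_def using False a_def c1
      by (intro cINF_lower bdd_belowI[of _ 0]) (auto intro: divide_nonneg_nonneg)
    then have "exp (n * L) \<le> exp (a n)" using False by (simp add: field_simps)
    then show ?thesis using c1[of n] by (simp add: a_def exp_of_nat_mult)
  qed
  ultimately show ?thesis using that[of "exp L"] by simp
qed

lemma mu_eq_growth_rate:
  assumes "2 \<le> k" "(\<lambda>n. root n (card (saw k n))) \<longlonglongrightarrow> \<mu>"
  shows "mu k = \<mu>"
  using assms by (simp add: mu_def limI)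

lemma mu_pos:
  assumes "1 \<le> k"
  shows "0 < mu k"
proof (cases "k = 1")
  case True
  then show ?thesis by (simp add: mu_def)
next
  case False
  obtain \<mu> :: real where "0 < \<mu>" "(\<lambda>n. root n (card (saw k n))) \<longlonglongrightarrow> \<mu>"
    by (rule saw_growth_rate[OF assms])
  then show ?thesis using False assms mu_eq_growth_rate[of k \<mu>] by simp
qed

lemma mu_power_le_card_saw:
  assumes "1 \<le> k"
  shows "mu k ^ n \<le> card (saw k n)"
proof (cases "k = 1")
  case True
  then show ?thesis using card_saw_pos[of k n] by (simp add: mu_def)
next
  case False
  obtain \<mu> :: real where "(\<lambda>m. root m (card (saw k m))) \<longlonglongrightarrow> \<mu>"
    "\<And>m. \<mu> ^ m \<le> card (saw k m)"
    using saw_growth_rate[OF assms] by metis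
  then show ?thesis using False assms mu_eq_growth_rate[of k \<mu>] by simp
qed

lemma summable_card_saw_power:
  assumes d: "2 \<le> d" and t: "0 < t" "t < 1 / mu d"
  shows "summable (\<lambda>n. real (card (saw d n)) * t ^ n)"
proof (rule root_test_convergence)
  obtain \<mu> :: real where "(\<lambda>n. root n (card (saw d n))) \<longlonglongrightarrow> \<mu>"
    using saw_growth_rate[of d] d by auto
  then have "(\<lambda>n. root n (card (saw d n)) * t) \<longlonglongrightarrow> mu d * t"
    using mu_eq_growth_rate[OF d] by (auto intro: tendsto_mult_right)
  moreover have "\<forall>\<^sub>F n in sequentially. root n (card (saw d n)) * t = root n (norm (real (card (saw d n)) * t ^ n))"
    using t by (intro eventually_sequentiallyI[of 1]) (simp add: real_root_mult real_root_power_cancel abs_mult)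
  ultimately show "(\<lambda>n. root n (norm (real (card (saw d n)) * t ^ n))) \<longlonglongrightarrow> mu d * t"
    by (rule Lim_transform_eventually)
  show "mu d * t < 1" using t mu_pos[of d] d by (simp add: field_simps)
qed

section \<open>Positive walks and the polynomial \<open>G\<^sub>N\<close>\<close>

lemma lattice_adj_snoc_0:
  assumes "lattice_adj k x y"
  shows "lattice_adj (Suc k) (x @ [0]) (y @ [0])"
proof -
  have len: "length x = k" "length y = k" using assms by (auto simp: lattice_adj_def)
  have "(\<Sum>j<k. \<bar>(x @ [0]) ! j - (y @ [0]) ! j\<bar>) = (\<Sum>j<k. \<bar>x ! j - y ! j\<bar>)"
    using len by (intro sum.cong) (auto simp: nth_append)
  then show ?thesis using assms len by (simp add: lattice_adj_def nth_append)
qed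

lemma saw_snoc_0:
  assumes w: "w \<in> saw k n"
  shows "map (\<lambda>v. v @ [0]) w \<in> saw (Suc k) n"
proof -
  have "inj_on (\<lambda>v::int list. v @ [0]) (set w)" by (simp add: inj_on_def)
  then show ?thesis
    using sawD[OF w] by (simp add: saw_def distinct_map origin_def replicate_append_same
        lattice_adj_snoc_0)
qed

lemma visits_boundary_walk:
  assumes "distinct w" "w \<noteq> []" "w ! 0 = origin d" "\<And>v. v \<in> set w \<Longrightarrow> v ! (d - 1) = 0"
  shows "visits d w = length w - 1"
proof -
  have "{i. i < length w \<and> w ! i \<noteq> origin d \<and> w ! i ! (d - 1) = 0} = {1..<length w}"
  proof (intro set_eqI iffI)
    fix i assume "i \<in> {i. i < length w \<and> w ! i \<noteq> origin d \<and> w ! i ! (d - 1) = 0}"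
    then show "i \<in> {1..<length w}" using assms(3) by (cases i) auto
  next
    fix i assume i: "i \<in> {1..<length w}"
    then have "w ! i \<noteq> w ! 0" using nth_eq_iff_index_eq[OF assms(1), of i 0] assms(2) by auto
    then show "i \<in> {i. i < length w \<and> w ! i \<noteq> origin d \<and> w ! i ! (d - 1) = 0}"
      using i assms(3,4) by (simp add: nth_mem)
  qed
  then show ?thesis by (simp add: visits_def)
qed

text \<open>A walk in the hyperplane of the half-lattice visits the boundary at every step.\<close>

lemma card_saw_le_cplus_all_visits:
  assumes "2 \<le> d"
  shows "card (saw (d - 1) N) \<le> cplus d N N"
proof -
  obtain k where d: "d = Suc k" using assms by (cases d) auto
  define E where "E w = map (\<lambda>v. v @ [0::int]) w" for w
  have "inj E" unfolding E_def by (intro inj_mapI) (simp add: inj_def)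
  moreover have "E w \<in> {w \<in> pos_walk d N. visits d w = N}" if w: "w \<in> saw k N" for w
  proof -
    have Ew: "E w \<in> saw d N" using saw_snoc_0[OF w] by (simp add: E_def d)
    have last: "v ! (d - 1) = 0" if "v \<in> set (E w)" for v
      using that saw_set_length[OF w] by (auto simp: E_def d nth_append)
    have "E w \<in> pos_walk d N"
      using Ew last sawD(1)[OF Ew] by (simp add: pos_walk_def nth_mem)
    moreover have "visits d (E w) = N"
      using sawD(1-3)[OF Ew] last by (subst visits_boundary_walk) auto
    ultimately show ?thesis by simp
  qed
  moreover have "finite {w \<in> pos_walk d N. visits d w = N}"
    using finite_saw[of d N] by (rule finite_subset[rotated]) (auto simp: pos_walk_def)
  ultimately have "card (saw k N) \<le> card {w \<in> pos_walk d N. visits d w = N}"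
    by (intro card_inj_on_le[of E]) (auto intro: inj_on_subset)
  then show ?thesis by (simp add: cplus_def d)
qed

lemma sum_cplus_le_card_saw: "(\<Sum>k\<le>n. cplus d n k) \<le> card (saw d n)"
proof -
  have fin: "finite (pos_walk d n)"
    using finite_saw[of d n] by (rule finite_subset[rotated]) (auto simp: pos_walk_def)
  have "(\<Sum>k\<le>n. cplus d n k) = card (\<Union>k\<le>n. {w \<in> pos_walk d n. visits d w = k})"
    unfolding cplus_def by (rule card_UN_disjoint[symmetric]) (use fin in auto)
  also have "\<dots> \<le> card (saw d n)"
    by (rule card_mono[OF finite_saw]) (auto simp: pos_walk_def)
  finally show ?thesis .
qed

lemma cplus_0_0:
  assumes "1 \<le> d"
  shows "cplus d 0 0 = 1"
proof -
  have "saw d 0 = {[origin d]}"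
  proof (intro set_eqI iffI)
    fix w assume "w \<in> saw d 0"
    then have "length w = 1" "w ! 0 = origin d" using sawD by simp_all
    then show "w \<in> {[origin d]}" by (cases w) auto
  next
    fix w assume "w \<in> {[origin d]}"
    then show "w \<in> saw d 0" by (simp add: saw_def)
  qed
  then have "pos_walk d 0 = {w \<in> {[origin d]}. \<forall>i\<le>0. 0 \<le> w ! i ! (d - 1)}"
    unfolding pos_walk_def by simp
  also have "\<dots> = {[origin d]}" using assms by (auto simp: origin_def)
  finally have "pos_walk d 0 = {[origin d]}" .
  moreover have "visits d [origin d] = 0"
  proof -
    have "{i. i < length [origin d] \<and> [origin d] ! i \<noteq> origin d
        \<and> [origin d] ! i ! (d - 1) = 0} = {}"
      by auto
    then show ?thesis by (simp only: visits_def card.empty)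
  qed
  ultimately have "{w \<in> pos_walk d 0. visits d w = 0} = {[origin d]}" by auto
  then show ?thesis by (simp add: cplus_def)
qed

definition G_coeff :: "nat \<Rightarrow> real \<Rightarrow> nat \<Rightarrow> nat \<Rightarrow> real" where
  "G_coeff d t N k = (\<Sum>n\<le>N. t ^ n * (if k \<le> n then real (cplus d n k) else 0))"

lemma coeff_G_poly: "coeff (G_poly d t N) k = complex_of_real (G_coeff d t N k)"
proof -
  have A: "coeff (A_poly d n) k = (if k \<le> n then of_nat (cplus d n k) else 0)" for n
    unfolding A_poly_def by (simp add: coeff_sum coeff_monom)
  have "coeff (G_poly d t N) k = (\<Sum>n\<le>N. complex_of_real (t ^ n) * coeff (A_poly d n) k)"
    by (simp add: G_poly_def coeff_sum)
  also have "\<dots> = complex_of_real (G_coeff d t N k)"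
    unfolding G_coeff_def of_real_sum by (intro sum.cong) (auto simp: A)
  finally show ?thesis .
qed

lemma G_coeff_nonneg: "0 < t \<Longrightarrow> 0 \<le> G_coeff d t N k"
  unfolding G_coeff_def by (intro sum_nonneg) auto

lemma G_coeff_top: "G_coeff d t N N = t ^ N * cplus d N N"
proof -
  have "G_coeff d t N N = (\<Sum>n\<in>{N}. t ^ n * (if N \<le> n then real (cplus d n N) else 0))"
    unfolding G_coeff_def by (intro sum.mono_neutral_right) auto
  then show ?thesis by simp
qed

lemma sum_G_coeff_le:
  assumes "0 < t"
  shows "(\<Sum>k\<le>N. G_coeff d t N k) \<le> (\<Sum>n\<le>N. real (card (saw d n)) * t ^ n)"
proof -
  have "(\<Sum>k\<le>N. G_coeff d t N k) = (\<Sum>n\<le>N. t ^ n * (\<Sum>k\<le>n. real (cplus d n k)))"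
    unfolding G_coeff_def
  proof (subst sum.swap, intro sum.cong refl)
    fix n assume "n \<in> {..N}"
    then have "{k \<in> {..N}. k \<le> n} = {..n}" by auto
    then have "(\<Sum>k\<le>N. if k \<le> n then real (cplus d n k) else 0) = (\<Sum>k\<le>n. real (cplus d n k))"
      by (simp flip: sum.inter_filter)
    then show "(\<Sum>k\<le>N. t ^ n * (if k \<le> n then real (cplus d n k) else 0))
        = t ^ n * (\<Sum>k\<le>n. real (cplus d n k))"
      by (simp flip: sum_distrib_left)
  qed
  also have "\<dots> \<le> (\<Sum>n\<le>N. real (card (saw d n)) * t ^ n)"
    using assms sum_cplus_le_card_saw[of d n for n]
    by (intro sum_mono) (simp add: mult.commute flip: of_nat_sum)
  finally show ?thesis .
qed

lemma G_coeff_top_ge: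
  assumes "2 \<le> d" "0 < t"
  shows "(mu (d - 1) * t) ^ N \<le> G_coeff d t N N"
proof -
  have "mu (d - 1) ^ N \<le> card (saw (d - 1) N)"
    using mu_power_le_card_saw[of "d - 1" N] assms by simp
  also have "\<dots> \<le> cplus d N N"
    using card_saw_le_cplus_all_visits[of d N] assms by simp
  finally show ?thesis
    using assms by (simp add: G_coeff_top power_mult_distrib mult.commute mult_right_mono)
qed

lemma G_poly_degree_lead_coeff:
  assumes "2 \<le> d" "0 < t"
  shows "degree (G_poly d t N) = N" "(mu (d - 1) * t) ^ N \<le> cmod (lead_coeff (G_poly d t N))"
proof -
  have "0 < (mu (d - 1) * t) ^ N" using mu_pos[of "d - 1"] assms by simp
  then have top: "0 < G_coeff d t N N" using G_coeff_top_ge[OF assms, of N] by linarith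
  have "degree (G_poly d t N) \<le> N"
    by (rule degree_le) (simp add: coeff_G_poly G_coeff_def)
  moreover have "N \<le> degree (G_poly d t N)"
    using top by (intro le_degree) (simp add: coeff_G_poly)
  ultimately show deg: "degree (G_poly d t N) = N" by simp
  show "(mu (d - 1) * t) ^ N \<le> cmod (lead_coeff (G_poly d t N))"
    using G_coeff_top_ge[OF assms] top by (simp add: deg coeff_G_poly)
qed

lemma G_poly_coeff_0_ge:
  assumes "1 \<le> d" "0 < t"
  shows "1 \<le> cmod (coeff (G_poly d t N) 0)"
proof -
  have "t ^ 0 * (if 0 \<le> (0::nat) then real (cplus d 0 0) else 0) \<le> G_coeff d t N 0"
    unfolding G_coeff_def by (rule member_le_sum) (use assms in auto)
  then show ?thesis
    using assms G_coeff_nonneg[of t] by (simp add: coeff_G_poly cplus_0_0)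
qed

lemma G_poly_coeff_norm_le:
  assumes "2 \<le> d" "0 < t" "t < 1 / mu d"
  shows "(\<Sum>k\<le>degree (G_poly d t N). cmod (coeff (G_poly d t N) k))
    \<le> (\<Sum>n. real (card (saw d n)) * t ^ n)"
proof -
  have "(\<Sum>k\<le>degree (G_poly d t N). cmod (coeff (G_poly d t N) k)) = (\<Sum>k\<le>N. G_coeff d t N k)"
    using G_poly_degree_lead_coeff(1)[OF assms(1,2)] G_coeff_nonneg[OF assms(2)]
    by (simp add: coeff_G_poly)
  also have "\<dots> \<le> (\<Sum>n\<le>N. real (card (saw d n)) * t ^ n)"
    using sum_G_coeff_le[OF assms(2)] .
  also have "\<dots> \<le> (\<Sum>n. real (card (saw d n)) * t ^ n)"
    using summable_card_saw_power[OF assms] assms(2) by (intro sum_le_suminf) auto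
  finally show ?thesis .
qed

lemma nu_open_lower_bound:
  assumes d: "2 \<le> d" and t: "0 < t" "t < 1 / mu d" and \<rho>: "0 < \<rho>" "\<rho> < 1"
  shows "N * (1 - \<bar>ln (mu (d - 1) * t)\<bar> / \<rho>) - 2 * ln (\<Sum>n. real (card (saw d n)) * t ^ n) / \<rho>
    \<le> nu_open d t N \<rho>"
proof -
  let ?p = "G_poly d t N"
  have p0: "1 \<le> cmod (coeff ?p 0)" using G_poly_coeff_0_ge[of d t] d t by simp
  have deg: "degree ?p = N" using G_poly_degree_lead_coeff(1)[OF d t(1)] .
  have q: "0 < mu (d - 1) * t" using mu_pos[of "d - 1"] d t by simp
  have lead: "(mu (d - 1) * t) ^ degree ?p \<le> cmod (lead_coeff ?p)"
    using G_poly_degree_lead_coeff(2)[OF d t(1), of N] by (simp only: deg)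
  have "?p \<noteq> 0" using p0 by auto
  then have "nu_open d t N \<rho>
      = size (filter_mset (\<lambda>z. 1 - \<rho> < cmod z \<and> cmod z < 1 / (1 - \<rho>)) (proots ?p))"
    unfolding nu_open_def by (rule sum_order_eq_size_filter_proots)
  then show ?thesis
    using annulus_roots_lower_bound[OF p0 q lead G_poly_coeff_norm_le[OF d t] \<rho>] deg by simp
qed

lemma nu_open_le_nu_le:
  assumes "2 \<le> d" "0 < t"
  shows "nu_open d t N \<rho> \<le> nu d t N \<rho>" "nu d t N \<rho> \<le> N"
proof -
  let ?p = "G_poly d t N"
  have p: "?p \<noteq> 0" using G_poly_coeff_0_ge[of d t N] assms by auto
  then show "nu_open d t N \<rho> \<le> nu d t N \<rho>"
    unfolding nu_open_def nu_def using poly_roots_finite[OF p]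
    by (intro sum_mono2) (auto elim: finite_subset[rotated])
  have "nu d t N \<rho> = size (filter_mset (\<lambda>z. 1 - \<rho> \<le> cmod z \<and> cmod z \<le> 1 / (1 - \<rho>)) (proots ?p))"
    unfolding nu_def by (rule sum_order_eq_size_filter_proots[OF p])
  also have "\<dots> \<le> N"
    using size_filter_mset_lesseq[of _ "proots ?p"] G_poly_degree_lead_coeff(1)[OF assms]
    by (simp add: size_proots_complex)
  finally show "nu d t N \<rho> \<le> N" .
qed

lemma ereal_le_liminf_ratio:
  fixes x :: "nat \<Rightarrow> real"
  assumes "\<And>N. N * c - C \<le> x N"
  shows "ereal c \<le> liminf (\<lambda>N. ereal (x N / N))"
proof -
  have "(\<lambda>N. ereal (c - C / N)) \<longlonglongrightarrow> ereal c"
    by (intro tendsto_ereal tendsto_eq_intros lim_const_over_n) auto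
  then have "ereal c = liminf (\<lambda>N. ereal (c - C / N))"
    by (rule lim_imp_Liminf[symmetric, rotated]) simp
  also have "\<dots> \<le> liminf (\<lambda>N. ereal (x N / N))"
  proof (rule Liminf_mono, rule eventually_sequentiallyI[of 1])
    fix N :: nat assume N: "1 \<le> N"
    have "(N * c - C) / N \<le> x N / N" using assms[of N] by (rule divide_right_mono) simp
    moreover have "c - C / N = (N * c - C) / N" using N by (simp add: field_simps)
    ultimately show "ereal (c - C / N) \<le> ereal (x N / N)" by simp
  qed
  finally show ?thesis .
qed

theorem theorem2p11:
  fixes d :: nat and t \<rho> :: real
  assumes "d \<ge> 2"
    and "1 / (exp 1 * mu (d - 1)) < t" and "t < 1 / mu d"
    and "\<bar>ln (mu (d - 1) * t)\<bar> < \<rho>" and "\<rho> < 1"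
  shows "0 < 1 - \<bar>ln (mu (d - 1) * t)\<bar> / \<rho>
       \<and> ereal (1 - \<bar>ln (mu (d - 1) * t)\<bar> / \<rho>)
           \<le> liminf (\<lambda>N. ereal (real (nu d t N \<rho>) / real N))
       \<and> liminf (\<lambda>N. ereal (real (nu d t N \<rho>) / real N))
           \<le> limsup (\<lambda>N. ereal (real (nu d t N \<rho>) / real N))
       \<and> limsup (\<lambda>N. ereal (real (nu d t N \<rho>) / real N)) \<le> 1
       \<and> 0 < liminf (\<lambda>N. ereal (real (nu_open d t N \<rho>) / real N))"
proof -
  have "0 < 1 / (exp 1 * mu (d - 1))" using mu_pos[of "d - 1"] assms(1) by simp
  then have t: "0 < t" using assms(2) by linarith
  have \<rho>: "0 < \<rho>" using assms(4) by linarith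
  have c: "0 < 1 - \<bar>ln (mu (d - 1) * t)\<bar> / \<rho>" using assms(4) \<rho> by simp
  have open_bound: "ereal (1 - \<bar>ln (mu (d - 1) * t)\<bar> / \<rho>)
      \<le> liminf (\<lambda>N. ereal (real (nu_open d t N \<rho>) / real N))"
    using nu_open_lower_bound[OF assms(1) t assms(3) \<rho> assms(5)] by (rule ereal_le_liminf_ratio)
  have "liminf (\<lambda>N. ereal (real (nu_open d t N \<rho>) / real N))
      \<le> liminf (\<lambda>N. ereal (real (nu d t N \<rho>) / real N))"
    using nu_open_le_nu_le(1)[OF assms(1) t]
    by (intro Liminf_mono always_eventually allI) (simp add: divide_right_mono)
  moreover have "limsup (\<lambda>N. ereal (real (nu d t N \<rho>) / real N)) \<le> 1"
    using nu_open_le_nu_le(2)[OF assms(1) t]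
    by (intro Limsup_bounded always_eventually allI) (auto simp: divide_le_eq_1)
  moreover have "liminf (\<lambda>N. ereal (real (nu d t N \<rho>) / real N))
      \<le> limsup (\<lambda>N. ereal (real (nu d t N \<rho>) / real N))"
    by (rule Liminf_le_Limsup) simp
  moreover have "0 < ereal (1 - \<bar>ln (mu (d - 1) * t)\<bar> / \<rho>)" using c by simp
  ultimately show ?thesis
    using c open_bound by (meson order_trans less_le_trans)
qed

end
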